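(* Let $q>0$, $q\neq1$, $M\ge2$, and let $G_q=SO_q(N)$ ($N\ge3$) or $Sp_q(n)$ ($N=2n$, $n\ge2$) with braid matrix $\hat R$, and $\hat R_M$ the braid matrix of $SL_q(M)$. Then each of $\hat R_M\otimes\hat R$ and $\hat R_M^{-1}\otimes\hat R$ has at least two distinct positive and at least two distinct negative eigenvalues (namely $q^2,q^{-2},-1,\pm q^{2-N},\mp q^{-N}$ for $\hat R_M\otimes\hat R$ and $-q^2,-q^{-2},1,\mp q^{2-N},\pm q^{-N}$ for $\hat R_M^{-1}\otimes\hat R$, upper signs for $SO_q(N)$, lower for $Sp_q(n)$). Consequently, by Lemma 1, there is no $GL_q(M)\times G_q$-covariant $q$-deformed Weyl or Clifford algebra with generators $A^A,A^+_A$ ($A=(\alpha,a)$) built from $\hat{\mathsf R}=\hat R_M^{\pm1}\otimes\hat R$ in the manner of Lemma 1 that has the same Poincaré series as its classical counterpart.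
   Context: For $SO_q(N)$: $\hat R=q\mathcal P^s-q^{-1}\mathcal P^a+q^{1-N}\mathcal P^t$; for $Sp_q(n)$: $\hat R=q\mathcal P^{s'}-q^{-1}\mathcal P^{a'}-q^{1-N}\mathcal P^{t'}$ (orthogonal projectors summing to the identity); $\hat R_M=q\mathcal P^S_M-q^{-1}\mathcal P^A_M$; $(X_M\otimes Y)^{AB}_{CD}=(X_M)^{\alpha\beta}_{\gamma\delta}Y^{ab}_{cd}$, and products of these projectors are the spectral projectors of $\hat R_M^{\pm1}\otimes\hat R$. Lemma 1: given a braid matrix $\hat{\mathsf R}=\sum_\mu\lambda_\mu\mathsf P^\mu$ (distinct $\lambda_\mu$), an algebra with relations $\sum(\mathsf P^\mp)^{CD}_{AB}A^+_CA^+_D=0$, $\sum(\mathsf P^\mp)^{AB}_{CD}A^DA^C=0$, $A^AA^+_B=\delta^A_B\mathbf 1\pm\sum S^{AC}_{BD}A^+_CA^D$ ($S$ numerical, $\mathsf P^\pm$ = sums of spectral projectors with positive/negative eigenvalue; upper sign Weyl, lower Clifford) can have the classical Poincaré series only if $\hat{\mathsf R}$ has exactly one negative (Weyl) resp. exactly one positive (Clifford) eigenvalue. *)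

theory Defs
  imports "HOL-Analysis.Analysis"
begin

text \<open>Real square matrices indexed by a finite type are 'real ^ 'i ^ 'i'.
  A braid matrix on V (x) V with dim V = N is indexed by pairs ('n * 'n).\<close>

definition is_eigenvalue :: "real ^ 'i::finite ^ 'i \<Rightarrow> real \<Rightarrow> bool" where
  "is_eigenvalue A c \<longleftrightarrow> (\<exists>v. v \<noteq> 0 \<and> A *v v = c *\<^sub>R v)"

definition spectrum_mat :: "real ^ 'i::finite ^ 'i \<Rightarrow> real set" where
  "spectrum_mat A = {c. is_eigenvalue A c}"

definition orth_proj :: "real ^ 'i::finite ^ 'i \<Rightarrow> bool" where
  "orth_proj P \<longleftrightarrow> P ** P = P \<and> transpose P = P"

text \<open>Tensor product (X_M (x) Y)^{AB}_{CD} = (X_M)^{alpha beta}_{gamma delta} Y^{ab}_{cd},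
  with A = (alpha,a), B = (beta,b), C = (gamma,c), D = (delta,d).
  Row index (A,B), column index (C,D).\<close>
definition tensorM ::
  "real ^ ('m::finite \<times> 'm) ^ ('m \<times> 'm) \<Rightarrow> real ^ ('n::finite \<times> 'n) ^ ('n \<times> 'n)
   \<Rightarrow> real ^ (('m \<times> 'n) \<times> ('m \<times> 'n)) ^ (('m \<times> 'n) \<times> ('m \<times> 'n))" where
  "tensorM X Y = (\<chi> AB CD. (case AB of ((\<alpha>, a), (\<beta>, b)) \<Rightarrow>
                    (case CD of ((\<gamma>, c), (\<delta>, d)) \<Rightarrow> X $ (\<alpha>, \<beta>) $ (\<gamma>, \<delta>) * Y $ (a, b) $ (c, d))))"

text \<open>Braid matrix of SL_q(M): R_M = q P^S - q^{-1} P^A, with P^S, P^A the q-symmetric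
  and q-antisymmetric orthogonal projectors (ranks M(M+1)/2 and M(M-1)/2) summing to 1.\<close>
definition SLq_braid :: "real \<Rightarrow> real ^ ('m::finite \<times> 'm) ^ ('m \<times> 'm) \<Rightarrow> bool" where
  "SLq_braid q R \<longleftrightarrow> (\<exists>PS PA. orth_proj PS \<and> orth_proj PA \<and> PS ** PA = 0 \<and> PA ** PS = 0
     \<and> PS + PA = mat 1
     \<and> rank PS = CARD('m) * (CARD('m) + 1) div 2 \<and> rank PA = CARD('m) * (CARD('m) - 1) div 2
     \<and> R = q *\<^sub>R PS - inverse q *\<^sub>R PA)"

definition SOq_braid :: "real \<Rightarrow> real ^ ('n::finite \<times> 'n) ^ ('n \<times> 'n) \<Rightarrow> bool" where
  "SOq_braid q R \<longleftrightarrow> (let N = CARD('n) in \<exists>Ps Pa Pt.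
     orth_proj Ps \<and> orth_proj Pa \<and> orth_proj Pt
     \<and> Ps ** Pa = 0 \<and> Pa ** Ps = 0 \<and> Ps ** Pt = 0 \<and> Pt ** Ps = 0 \<and> Pa ** Pt = 0 \<and> Pt ** Pa = 0
     \<and> Ps + Pa + Pt = mat 1
     \<and> rank Ps = N * (N + 1) div 2 - 1 \<and> rank Pa = N * (N - 1) div 2 \<and> rank Pt = 1
     \<and> R = q *\<^sub>R Ps - inverse q *\<^sub>R Pa + (q powi (1 - int N)) *\<^sub>R Pt)"

definition Spq_braid :: "real \<Rightarrow> real ^ ('n::finite \<times> 'n) ^ ('n \<times> 'n) \<Rightarrow> bool" where
  "Spq_braid q R \<longleftrightarrow> (let N = CARD('n) in \<exists>Ps Pa Pt.
     orth_proj Ps \<and> orth_proj Pa \<and> orth_proj Pt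
     \<and> Ps ** Pa = 0 \<and> Pa ** Ps = 0 \<and> Ps ** Pt = 0 \<and> Pt ** Ps = 0 \<and> Pa ** Pt = 0 \<and> Pt ** Pa = 0
     \<and> Ps + Pa + Pt = mat 1
     \<and> rank Ps = N * (N + 1) div 2 \<and> rank Pa = N * (N - 1) div 2 - 1 \<and> rank Pt = 1
     \<and> R = q *\<^sub>R Ps - inverse q *\<^sub>R Pa - (q powi (1 - int N)) *\<^sub>R Pt)"

definition two_pos_two_neg :: "real ^ 'i::finite ^ 'i \<Rightarrow> bool" where
  "two_pos_two_neg A \<longleftrightarrow>
     (\<exists>x y. x \<noteq> y \<and> 0 < x \<and> 0 < y \<and> is_eigenvalue A x \<and> is_eigenvalue A y) \<and>
     (\<exists>x y. x \<noteq> y \<and> x < 0 \<and> y < 0 \<and> is_eigenvalue A x \<and> is_eigenvalue A y)"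

text \<open>Hypothesis of Lemma 1 (necessary condition for classical Poincare series):
  exactly one negative eigenvalue (Weyl) resp. exactly one positive eigenvalue (Clifford).\<close>
definition lemma1_weyl_ok :: "real ^ 'i::finite ^ 'i \<Rightarrow> bool" where
  "lemma1_weyl_ok A \<longleftrightarrow> (\<exists>!c. c < 0 \<and> is_eigenvalue A c)"

definition lemma1_clifford_ok :: "real ^ 'i::finite ^ 'i \<Rightarrow> bool" where
  "lemma1_clifford_ok A \<longleftrightarrow> (\<exists>!c. 0 < c \<and> is_eigenvalue A c)"

end

theory Submission
  imports Defs
begin

(*
  Both braid matrices are diagonalised by resolutions of the identity (mutually orthogonal
  nonzero idempotents summing to 1): R_M = q P^S - q^-1 P^A, R_M^-1 = q^-1 P^S - q P^A and
  R = q P^s - q^-1 P^a +- q^(1-N) P^t. The tensor products of the idempotents of two such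
  resolutions again form a resolution of the identity, so the spectrum of R_M^(+-1) (x) R consists
  of all products of an eigenvalue of each factor. For R_M (x) R these are q^2 and q^-2 > 0
  (distinct since q <> 1), and -1 together with one of +-q^(2-N), -+q^(-N) < 0 (different
  from -1 since N >= 3); the spectrum of R_M^-1 (x) R is its negative. Two positive and two
  negative eigenvalues violate the condition of Lemma 1 for Weyl as well as Clifford algebras.
*)

lemma power_int_inject:
  fixes q :: real
  assumes "0 < q" "q \<noteq> 1"
  shows "q powi a = q powi b \<longleftrightarrow> a = b"
  using assms powr_inj[OF assms] by (simp flip: powr_real_of_int')

lemma power_int_one_minus_shift:
  fixes q :: real
  assumes "q \<noteq> 0"
  shows "q * q powi (1 - k) = q powi (2 - k)" and "q powi (1 - k) / q = q powi (- k)"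
  using assms power_int_add_1'[of q "1 - k"] power_int_diff[of q "1 - k" 1] by simp_all

lemma matrix_add_rdistrib: "((A :: real^'j::finite^'i) + B) ** C = A ** C + B ** C"
  by (simp add: matrix_matrix_mult_def vec_eq_iff sum.distrib algebra_simps)

lemma matrix_mul_sum_left: "sum A K ** (B :: real^'k::finite^'j::finite) = (\<Sum>k\<in>K. A k ** B)"
  by (induction K rule: infinite_finite_induct) (simp_all add: matrix_add_rdistrib)

lemma matrix_mul_sum_right: "(A :: real^'j::finite^'i) ** sum B K = (\<Sum>k\<in>K. A ** B k)"
  by (induction K rule: infinite_finite_induct) (simp_all add: matrix_add_ldistrib)

lemma matrix_vector_mul_sum_left: "sum A K *v (x :: real^'j::finite) = (\<Sum>k\<in>K. A k *v x)"
  by (induction K rule: infinite_finite_induct) (simp_all add: matrix_vector_mult_add_rdistrib)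

lemma matrix_inv_eqI:
  fixes A B :: "real^'i::finite^'i"
  assumes "A ** B = mat 1" "B ** A = mat 1"
  shows "matrix_inv A = B"
proof -
  let ?A' = "matrix_inv A"
  have inv: "A ** ?A' = mat 1 \<and> ?A' ** A = mat 1"
    unfolding matrix_inv_def by (rule someI[of _ B]) (use assms in simp)
  then have "?A' = ?A' ** (A ** B)" using assms by simp
  also have "\<dots> = B" using inv by (simp add: matrix_mul_assoc)
  finally show ?thesis .
qed

definition resolution_of_identity :: "'k set \<Rightarrow> ('k \<Rightarrow> real^'i::finite^'i) \<Rightarrow> bool" where
  "resolution_of_identity K E \<longleftrightarrow> finite K \<and> sum E K = mat 1
     \<and> (\<forall>k\<in>K. E k ** E k = E k \<and> E k \<noteq> 0)
     \<and> (\<forall>j\<in>K. \<forall>k\<in>K. j \<noteq> k \<longrightarrow> E j ** E k = 0)"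

(* Unlike in Lemma 1, the coefficients need not be distinct: products of eigenvalues of two
   factors may coincide, as q * (-q^-1) = -q^-1 * q does for R_M (x) R. *)
definition has_spectral_resolution :: "real^'i::finite^'i \<Rightarrow> ('k \<Rightarrow> real) \<Rightarrow> 'k set \<Rightarrow> bool" where
  "has_spectral_resolution A c K \<longleftrightarrow>
     (\<exists>E. resolution_of_identity K E \<and> A = (\<Sum>k\<in>K. c k *\<^sub>R E k))"

lemma resolution_of_identity_mul:
  assumes E: "resolution_of_identity K E" and j: "j \<in> K"
  shows "E j ** (\<Sum>k\<in>K. c k *\<^sub>R E k) = c j *\<^sub>R E j"
    and "(\<Sum>k\<in>K. c k *\<^sub>R E k) ** E j = c j *\<^sub>R E j"
proof -
  have delta: "(\<Sum>k\<in>K. if k = j then c j *\<^sub>R E j else 0) = c j *\<^sub>R E j"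
    using E j by (simp add: resolution_of_identity_def)
  have "E j ** (\<Sum>k\<in>K. c k *\<^sub>R E k) = (\<Sum>k\<in>K. c k *\<^sub>R (E j ** E k))"
    by (simp add: matrix_mul_sum_right matrix_scalar_ac flip: scalar_matrix_assoc)
  also have "\<dots> = (\<Sum>k\<in>K. if k = j then c j *\<^sub>R E j else 0)"
    by (rule sum.cong) (use E j in \<open>auto simp: resolution_of_identity_def\<close>)
  finally show "E j ** (\<Sum>k\<in>K. c k *\<^sub>R E k) = c j *\<^sub>R E j"
    using delta by simp
  have "(\<Sum>k\<in>K. c k *\<^sub>R E k) ** E j = (\<Sum>k\<in>K. c k *\<^sub>R (E k ** E j))"
    by (simp add: matrix_mul_sum_left scalar_matrix_assoc)
  also have "\<dots> = (\<Sum>k\<in>K. if k = j then c j *\<^sub>R E j else 0)"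
    by (rule sum.cong) (use E j in \<open>auto simp: resolution_of_identity_def\<close>)
  finally show "(\<Sum>k\<in>K. c k *\<^sub>R E k) ** E j = c j *\<^sub>R E j"
    using delta by simp
qed

lemma has_spectral_resolution_cong:
  fixes A :: "real^'i::finite^'i"
  assumes "\<And>k. k \<in> K \<Longrightarrow> c k = d k"
  shows "has_spectral_resolution A c K \<longleftrightarrow> has_spectral_resolution A d K"
proof -
  have "(\<Sum>k\<in>K. c k *\<^sub>R E k) = (\<Sum>k\<in>K. d k *\<^sub>R E k)" for E :: "_ \<Rightarrow> real^'i^'i"
    using assms by (intro sum.cong) simp_all
  then show ?thesis
    unfolding has_spectral_resolution_def by simp
qed

lemma spectrum_mat_spectral_resolution:
  assumes "has_spectral_resolution A c K"
  shows "spectrum_mat A = c ` K"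
proof -
  obtain E where E: "resolution_of_identity K E" and A: "A = (\<Sum>k\<in>K. c k *\<^sub>R E k)"
    using assms unfolding has_spectral_resolution_def by blast
  show ?thesis
  proof (intro set_eqI iffI)
    fix x assume "x \<in> spectrum_mat A"
    then obtain v where v: "v \<noteq> 0" "A *v v = x *\<^sub>R v"
      by (auto simp: spectrum_mat_def is_eigenvalue_def)
    have "v = (\<Sum>k\<in>K. E k *v v)"
      using E by (simp add: resolution_of_identity_def flip: matrix_vector_mul_sum_left)
    then obtain j where j: "j \<in> K" "E j *v v \<noteq> 0"
      using v(1) by (metis (mono_tags, lifting) sum.neutral)
    have "c j *\<^sub>R (E j *v v) = E j *v (A *v v)"
      using resolution_of_identity_mul(1)[OF E j(1)]
      by (simp add: A matrix_vector_mul_assoc scaleR_matrix_vector_assoc)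
    also have "\<dots> = x *\<^sub>R (E j *v v)"
      using v(2) by (simp add: matrix_vector_mult_scaleR)
    finally have "x = c j"
      using j(2) by (metis scaleR_cancel_right)
    then show "x \<in> c ` K" using j(1) by blast
  next
    fix x assume "x \<in> c ` K"
    then obtain j where j: "j \<in> K" "x = c j" by blast
    then obtain u where u: "E j *v u \<noteq> 0"
      using E matrix_eq[of "E j" 0] by (auto simp: resolution_of_identity_def)
    have "A *v (E j *v u) = x *\<^sub>R (E j *v u)"
      using resolution_of_identity_mul(2)[OF E j(1)]
      by (simp add: A j(2) matrix_vector_mul_assoc scaleR_matrix_vector_assoc)
    then show "x \<in> spectrum_mat A"
      using u by (auto simp: spectrum_mat_def is_eigenvalue_def)
  qed
qed

lemma matrix_inv_spectral_resolution:
  assumes "has_spectral_resolution A c K" and "\<And>k. k \<in> K \<Longrightarrow> c k \<noteq> 0"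
  shows "has_spectral_resolution (matrix_inv A) (\<lambda>k. inverse (c k)) K"
proof -
  obtain E where E: "resolution_of_identity K E" and A: "A = (\<Sum>k\<in>K. c k *\<^sub>R E k)"
    using assms(1) unfolding has_spectral_resolution_def by blast
  define B where "B = (\<Sum>k\<in>K. inverse (c k) *\<^sub>R E k)"
  have "A ** B = (\<Sum>k\<in>K. inverse (c k) *\<^sub>R (A ** E k))"
    by (simp add: B_def matrix_mul_sum_right matrix_scalar_ac flip: scalar_matrix_assoc)
  also have "\<dots> = (\<Sum>k\<in>K. E k)"
    using assms(2) by (intro sum.cong) (simp_all add: A resolution_of_identity_mul(2)[OF E])
  finally have AB: "A ** B = mat 1"
    using E by (simp add: resolution_of_identity_def)
  have "B ** A = (\<Sum>k\<in>K. inverse (c k) *\<^sub>R (E k ** A))"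
    by (simp add: B_def matrix_mul_sum_left scalar_matrix_assoc)
  also have "\<dots> = (\<Sum>k\<in>K. E k)"
    using assms(2) by (intro sum.cong) (simp_all add: A resolution_of_identity_mul(1)[OF E])
  finally have BA: "B ** A = mat 1"
    using E by (simp add: resolution_of_identity_def)
  show ?thesis
    using E matrix_inv_eqI[OF AB BA] unfolding has_spectral_resolution_def B_def by blast
qed

lemma tensorM_nth [simp]:
  "tensorM X Y $ ((\<alpha>, a), (\<beta>, b)) $ ((\<gamma>, c), (\<delta>, d)) = X $ (\<alpha>, \<beta>) $ (\<gamma>, \<delta>) * Y $ (a, b) $ (c, d)"
  by (simp add: tensorM_def)

lemma matrix_prod_index_eqI:
  assumes "\<And>\<alpha> a \<beta> b \<gamma> c \<delta> d.
    A $ ((\<alpha>, a), (\<beta>, b)) $ ((\<gamma>, c), (\<delta>, d)) = B $ ((\<alpha>, a), (\<beta>, b)) $ ((\<gamma>, c), (\<delta>, d))"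
  shows "A = B"
  using assms by (simp add: vec_eq_iff)

lemma sum_UNIV_prod:
  "(\<Sum>p\<in>UNIV. F p) = (\<Sum>x\<in>(UNIV::'a::finite set). \<Sum>y\<in>(UNIV::'b::finite set). F (x, y))"
  by (simp add: sum.cartesian_product flip: UNIV_Times_UNIV)

lemma matrix_mul_tensorM:
  fixes X X' :: "real ^ ('m::finite \<times> 'm) ^ ('m \<times> 'm)" and Y Y' :: "real ^ ('n::finite \<times> 'n) ^ ('n \<times> 'n)"
  shows "tensorM X Y ** tensorM X' Y' = tensorM (X ** X') (Y ** Y')"
proof (rule matrix_prod_index_eqI)
  fix \<alpha> a \<beta> b \<gamma>' c' \<delta>' d'
  have "(tensorM X Y ** tensorM X' Y') $ ((\<alpha>, a), (\<beta>, b)) $ ((\<gamma>', c'), (\<delta>', d'))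
      = (\<Sum>\<gamma>\<in>UNIV. \<Sum>c\<in>UNIV. \<Sum>\<delta>\<in>UNIV. \<Sum>d\<in>UNIV.
           (X$(\<alpha>,\<beta>)$(\<gamma>,\<delta>) * X'$(\<gamma>,\<delta>)$(\<gamma>',\<delta>')) * (Y$(a,b)$(c,d) * Y'$(c,d)$(c',d')))"
    by (simp add: matrix_matrix_mult_def sum_UNIV_prod[where F="\<lambda>p. _ p"] mult_ac)
  also have "\<dots> = (\<Sum>\<gamma>\<in>UNIV. \<Sum>\<delta>\<in>UNIV. \<Sum>c\<in>UNIV. \<Sum>d\<in>UNIV.
           (X$(\<alpha>,\<beta>)$(\<gamma>,\<delta>) * X'$(\<gamma>,\<delta>)$(\<gamma>',\<delta>')) * (Y$(a,b)$(c,d) * Y'$(c,d)$(c',d')))"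
    by (rule sum.cong[OF refl], rule sum.swap)
  also have "\<dots> = (\<Sum>\<gamma>\<in>UNIV. \<Sum>\<delta>\<in>UNIV. X$(\<alpha>,\<beta>)$(\<gamma>,\<delta>) * X'$(\<gamma>,\<delta>)$(\<gamma>',\<delta>'))
                 * (\<Sum>c\<in>UNIV. \<Sum>d\<in>UNIV. Y$(a,b)$(c,d) * Y'$(c,d)$(c',d'))"
    by (simp only: sum_distrib_right) (simp only: sum_distrib_left)
  also have "\<dots> = tensorM (X ** X') (Y ** Y') $ ((\<alpha>, a), (\<beta>, b)) $ ((\<gamma>', c'), (\<delta>', d'))"
    by (simp add: matrix_matrix_mult_def sum_UNIV_prod[where F="\<lambda>p. _ p"])
  finally show "(tensorM X Y ** tensorM X' Y') $ ((\<alpha>, a), (\<beta>, b)) $ ((\<gamma>', c'), (\<delta>', d'))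
      = tensorM (X ** X') (Y ** Y') $ ((\<alpha>, a), (\<beta>, b)) $ ((\<gamma>', c'), (\<delta>', d'))" .
qed

lemma tensorM_scaleR_sum:
  "tensorM (\<Sum>k\<in>K. c k *\<^sub>R X k) (\<Sum>j\<in>J. d j *\<^sub>R Y j)
     = (\<Sum>(k, j)\<in>K \<times> J. (c k * d j) *\<^sub>R tensorM (X k) (Y j))"
  by (rule matrix_prod_index_eqI)
     (simp add: sum_component sum_product sum.cartesian_product case_prod_beta mult_ac)

lemma tensorM_mat_1: "tensorM (mat 1) (mat 1) = mat 1"
  by (rule matrix_prod_index_eqI) (simp add: mat_def)

lemma tensorM_eq_0_iff: "tensorM X Y = 0 \<longleftrightarrow> X = 0 \<or> Y = 0"
proof
  assume XY: "tensorM X Y = 0"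
  show "X = 0 \<or> Y = 0"
  proof (rule ccontr)
    assume "\<not> (X = 0 \<or> Y = 0)"
    then obtain \<alpha> \<beta> \<gamma> \<delta> a b c d
      where "X $ (\<alpha>, \<beta>) $ (\<gamma>, \<delta>) \<noteq> 0" "Y $ (a, b) $ (c, d) \<noteq> 0"
      by (auto simp: vec_eq_iff)
    then have "tensorM X Y $ ((\<alpha>, a), (\<beta>, b)) $ ((\<gamma>, c), (\<delta>, d)) \<noteq> 0"
      by simp
    with XY show False by simp
  qed
qed (auto intro: matrix_prod_index_eqI)

lemma resolution_of_identity_tensorM:
  assumes E: "resolution_of_identity K E" and F: "resolution_of_identity J F"
  shows "resolution_of_identity (K \<times> J) (\<lambda>(k, j). tensorM (E k) (F j))"
proof -
  have "(\<Sum>(k, j)\<in>K \<times> J. tensorM (E k) (F j)) = tensorM (sum E K) (sum F J)"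
    using tensorM_scaleR_sum[of "\<lambda>_. 1" E K "\<lambda>_. 1" F J] by simp
  then show ?thesis
    using E F unfolding resolution_of_identity_def
    by (auto simp: tensorM_mat_1 matrix_mul_tensorM tensorM_eq_0_iff)
qed

lemma tensorM_spectral_resolution:
  assumes "has_spectral_resolution A c K" and "has_spectral_resolution B d J"
  shows "has_spectral_resolution (tensorM A B) (\<lambda>(k, j). c k * d j) (K \<times> J)"
  using assms resolution_of_identity_tensorM
  unfolding has_spectral_resolution_def by (fastforce simp: tensorM_scaleR_sum case_prod_beta)

lemma has_spectral_resolution_pair:
  assumes "orth_proj P" "orth_proj Q" "P ** Q = 0" "Q ** P = 0" "P + Q = mat 1"
    and "P \<noteq> 0" "Q \<noteq> 0"
  shows "has_spectral_resolution (a *\<^sub>R P + b *\<^sub>R Q) ((!) [a, b]) {0, 1}"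
proof -
  have "resolution_of_identity {0, 1} ((!) [P, Q])"
    using assms by (simp add: resolution_of_identity_def orth_proj_def)
  then show ?thesis
    unfolding has_spectral_resolution_def by (intro exI[of _ "(!) [P, Q]"]) simp
qed

lemma has_spectral_resolution_triple:
  assumes "orth_proj P" "orth_proj Q" "orth_proj T"
    and "P ** Q = 0" "Q ** P = 0" "P ** T = 0" "T ** P = 0" "Q ** T = 0" "T ** Q = 0"
    and "P + Q + T = mat 1" "P \<noteq> 0" "Q \<noteq> 0" "T \<noteq> 0"
  shows "has_spectral_resolution (a *\<^sub>R P + b *\<^sub>R Q + c *\<^sub>R T) ((!) [a, b, c]) {0, 1, 2}"
proof -
  have "resolution_of_identity {0, 1, 2} ((!) [P, Q, T])"
    using assms by (simp add: resolution_of_identity_def orth_proj_def add.assoc)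
  then show ?thesis
    unfolding has_spectral_resolution_def by (intro exI[of _ "(!) [P, Q, T]"]) (simp add: add.assoc)
qed

lemma SLq_braid_spectral_resolution:
  fixes RM :: "real ^ ('m::finite \<times> 'm) ^ ('m \<times> 'm)"
  assumes "CARD('m) \<ge> 2" and "SLq_braid q RM"
  shows "has_spectral_resolution RM ((!) [q, - inverse q]) {0, 1}"
proof -
  let ?M = "CARD('m)"
  obtain PS PA where h: "orth_proj PS" "orth_proj PA" "PS ** PA = 0" "PA ** PS = 0"
      "PS + PA = mat 1" "rank PS = ?M * (?M + 1) div 2" "rank PA = ?M * (?M - 1) div 2"
      "RM = q *\<^sub>R PS - inverse q *\<^sub>R PA"
    using assms(2) unfolding SLq_braid_def by blast
  have "2 * 1 \<le> ?M * (?M + 1)" "2 * 1 \<le> ?M * (?M - 1)"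
    using assms(1) by (intro mult_le_mono; simp)+
  then have "PS \<noteq> 0" "PA \<noteq> 0"
    using h(6,7) by auto
  with h show ?thesis
    using has_spectral_resolution_pair[of PS PA q "- inverse q"] by simp
qed

lemma SOq_braid_spectral_resolution:
  fixes R :: "real ^ ('n::finite \<times> 'n) ^ ('n \<times> 'n)"
  assumes "CARD('n) \<ge> 3" and "SOq_braid q R"
  shows "has_spectral_resolution R ((!) [q, - inverse q, q powi (1 - int CARD('n))]) {0, 1, 2}"
proof -
  let ?N = "CARD('n)"
  obtain Ps Pa Pt where h: "orth_proj Ps" "orth_proj Pa" "orth_proj Pt"
      "Ps ** Pa = 0" "Pa ** Ps = 0" "Ps ** Pt = 0" "Pt ** Ps = 0" "Pa ** Pt = 0" "Pt ** Pa = 0"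
      "Ps + Pa + Pt = mat 1"
      "rank Ps = ?N * (?N + 1) div 2 - 1" "rank Pa = ?N * (?N - 1) div 2" "rank Pt = 1"
      "R = q *\<^sub>R Ps - inverse q *\<^sub>R Pa + (q powi (1 - int ?N)) *\<^sub>R Pt"
    using assms(2) unfolding SOq_braid_def Let_def by blast
  have "3 * 4 \<le> ?N * (?N + 1)" "3 * 2 \<le> ?N * (?N - 1)"
    using assms(1) by (intro mult_le_mono; simp)+
  then have "Ps \<noteq> 0" "Pa \<noteq> 0" "Pt \<noteq> 0"
    using h(11-13) by auto
  with h show ?thesis
    using has_spectral_resolution_triple[of Ps Pa Pt q "- inverse q" "q powi (1 - int ?N)"] by simp
qed

lemma Spq_braid_spectral_resolution:
  fixes R :: "real ^ ('n::finite \<times> 'n) ^ ('n \<times> 'n)"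
  assumes "CARD('n) \<ge> 3" and "Spq_braid q R"
  shows "has_spectral_resolution R ((!) [q, - inverse q, - (q powi (1 - int CARD('n)))]) {0, 1, 2}"
proof -
  let ?N = "CARD('n)"
  obtain Ps Pa Pt where h: "orth_proj Ps" "orth_proj Pa" "orth_proj Pt"
      "Ps ** Pa = 0" "Pa ** Ps = 0" "Ps ** Pt = 0" "Pt ** Ps = 0" "Pa ** Pt = 0" "Pt ** Pa = 0"
      "Ps + Pa + Pt = mat 1"
      "rank Ps = ?N * (?N + 1) div 2" "rank Pa = ?N * (?N - 1) div 2 - 1" "rank Pt = 1"
      "R = q *\<^sub>R Ps - inverse q *\<^sub>R Pa - (q powi (1 - int ?N)) *\<^sub>R Pt"
    using assms(2) unfolding Spq_braid_def Let_def by blast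
  have "3 * 4 \<le> ?N * (?N + 1)" "3 * 2 \<le> ?N * (?N - 1)"
    using assms(1) by (intro mult_le_mono; simp)+
  then have "Ps \<noteq> 0" "Pa \<noteq> 0" "Pt \<noteq> 0"
    using h(11-13) by auto
  with h show ?thesis
    using has_spectral_resolution_triple[of Ps Pa Pt q "- inverse q" "- (q powi (1 - int ?N))"] by simp
qed

lemma spectrum_mat_tensorM_pair_triple:
  assumes "has_spectral_resolution X ((!) [a, b]) {0, 1}"
    and "has_spectral_resolution Y ((!) [c, d, e]) {0, 1, 2}"
  shows "spectrum_mat (tensorM X Y) = {a * c, a * d, a * e, b * c, b * d, b * e}"
proof -
  have "spectrum_mat (tensorM X Y) = (\<lambda>(k, j). [a, b] ! k * [c, d, e] ! j) ` ({0, 1} \<times> {0, 1, 2})"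
    by (rule spectrum_mat_spectral_resolution[OF tensorM_spectral_resolution[OF assms]])
  then show ?thesis
    by (simp add: insert_commute)
qed

lemma spectra_tensorM_braid:
  assumes q: "q \<noteq> 0"
    and RM: "has_spectral_resolution RM ((!) [q, - inverse q]) {0, 1}"
    and R: "has_spectral_resolution R ((!) [q, - inverse q, t]) {0, 1, 2}"
  shows "spectrum_mat (tensorM RM R) = {q ^ 2, q powi (-2), -1, q * t, - (t / q)}"
    and "spectrum_mat (tensorM (matrix_inv RM) R) = {- (q ^ 2), - (q powi (-2)), 1, - (q * t), t / q}"
proof -
  have "inverse ([q, - inverse q] ! k) = [inverse q, - q] ! k" if "k \<in> {0, 1}" for k
    using that by auto
  moreover have "has_spectral_resolution (matrix_inv RM) (\<lambda>k. inverse ([q, - inverse q] ! k)) {0, 1}"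
    using q by (intro matrix_inv_spectral_resolution[OF RM]) auto
  ultimately have RM': "has_spectral_resolution (matrix_inv RM) ((!) [inverse q, - q]) {0, 1}"
    by (rule has_spectral_resolution_cong[THEN iffD1])
  show "spectrum_mat (tensorM RM R) = {q ^ 2, q powi (-2), -1, q * t, - (t / q)}"
    using q by (auto simp: spectrum_mat_tensorM_pair_triple[OF RM R]
        power_int_minus power2_eq_square divide_inverse)
  show "spectrum_mat (tensorM (matrix_inv RM) R) = {- (q ^ 2), - (q powi (-2)), 1, - (q * t), t / q}"
    using q by (auto simp: spectrum_mat_tensorM_pair_triple[OF RM' R]
        power_int_minus power2_eq_square divide_inverse)
qed

lemma two_pos_two_neg_I:
  assumes "{x, y, u, v} \<subseteq> spectrum_mat A" and "x \<noteq> y" "0 < x" "0 < y" and "u \<noteq> v" "u < 0" "v < 0"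
  shows "two_pos_two_neg A"
  using assms unfolding two_pos_two_neg_def spectrum_mat_def by blast

lemma two_pos_two_neg_imp_not_lemma1_ok:
  assumes "two_pos_two_neg A"
  shows "\<not> lemma1_weyl_ok A" and "\<not> lemma1_clifford_ok A"
  using assms unfolding two_pos_two_neg_def lemma1_weyl_ok_def lemma1_clifford_ok_def by blast+

lemma two_pos_two_neg_uminus:
  assumes "spectrum_mat B = uminus ` spectrum_mat A" and "two_pos_two_neg A"
  shows "two_pos_two_neg B"
proof -
  have eig: "is_eigenvalue B x \<longleftrightarrow> is_eigenvalue A (- x)" for x
  proof -
    have "x \<in> spectrum_mat B \<longleftrightarrow> - x \<in> spectrum_mat A"
      using assms(1) by (simp add: image_iff) (metis minus_minus)
    then show ?thesis
      by (simp add: spectrum_mat_def)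
  qed
  from assms(2) obtain x y u v where
    pos: "x \<noteq> y" "0 < x" "0 < y" "is_eigenvalue A x" "is_eigenvalue A y" and
    neg: "u \<noteq> v" "u < 0" "v < 0" "is_eigenvalue A u" "is_eigenvalue A v"
    unfolding two_pos_two_neg_def by blast
  have "- u \<noteq> - v \<and> 0 < - u \<and> 0 < - v \<and> is_eigenvalue B (- u) \<and> is_eigenvalue B (- v)"
    using neg by (simp add: eig)
  moreover have "- x \<noteq> - y \<and> - x < 0 \<and> - y < 0 \<and> is_eigenvalue B (- x) \<and> is_eigenvalue B (- y)"
    using pos by (simp add: eig)
  ultimately show ?thesis
    unfolding two_pos_two_neg_def by blast
qed

lemma two_pos_two_neg_tensorM_braid:
  assumes q: "0 < q" "q \<noteq> 1" and t: "t \<noteq> 0" "q * t \<noteq> -1" "t / q \<noteq> 1"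
    and RM: "has_spectral_resolution RM ((!) [q, - inverse q]) {0, 1}"
    and R: "has_spectral_resolution R ((!) [q, - inverse q, t]) {0, 1, 2}"
  shows "two_pos_two_neg (tensorM RM R)" and "two_pos_two_neg (tensorM (matrix_inv RM) R)"
proof -
  note S = spectra_tensorM_braid[OF _ RM R]
  have pos: "q ^ 2 \<noteq> q powi (-2)" "0 < q ^ 2" "0 < q powi (-2)"
    using q power_int_inject[OF q, of 2 "-2"] by simp_all
  show *: "two_pos_two_neg (tensorM RM R)"
  proof (cases "0 < t")
    case True
    then have "0 < t / q" using q by simp
    then show ?thesis
      using q t pos by (intro two_pos_two_neg_I[of "q ^ 2" "q powi (-2)" "-1" "- (t / q)"]) (simp_all add: S)
  next
    case False
    then have "q * t < 0" using q t by (simp add: mult_pos_neg)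
    then show ?thesis
      using q t pos by (intro two_pos_two_neg_I[of "q ^ 2" "q powi (-2)" "-1" "q * t"]) (simp_all add: S)
  qed
  show "two_pos_two_neg (tensorM (matrix_inv RM) R)"
    using q by (intro two_pos_two_neg_uminus[OF _ *]) (simp add: S)
qed

lemma tensorM_SOq_braid:
  fixes RM :: "real ^ ('m::finite \<times> 'm) ^ ('m \<times> 'm)" and R :: "real ^ ('n::finite \<times> 'n) ^ ('n \<times> 'n)"
  assumes q: "0 < q" "q \<noteq> 1" and M: "CARD('m) \<ge> 2" "SLq_braid q RM" and N: "CARD('n) \<ge> 3" "SOq_braid q R"
  shows "spectrum_mat (tensorM RM R)
           = {q ^ 2, q powi (-2), -1, q powi (2 - int CARD('n)), - (q powi (- int CARD('n)))}"
    and "spectrum_mat (tensorM (matrix_inv RM) R)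
           = {- (q ^ 2), - (q powi (-2)), 1, - (q powi (2 - int CARD('n))), q powi (- int CARD('n))}"
    and "two_pos_two_neg (tensorM RM R)" and "two_pos_two_neg (tensorM (matrix_inv RM) R)"
proof -
  let ?N = "int CARD('n)"
  note RM = SLq_braid_spectral_resolution[OF M]
  note R = SOq_braid_spectral_resolution[OF N]
  note shift = power_int_one_minus_shift[of q ?N]
  have "q powi (- ?N) \<noteq> 1"
    using power_int_inject[OF q, of "- ?N" 0] N(1) by simp
  moreover have "q powi (2 - ?N) \<noteq> -1"
    using zero_less_power_int[OF q(1), of "2 - ?N"] by linarith
  ultimately show "two_pos_two_neg (tensorM RM R)" "two_pos_two_neg (tensorM (matrix_inv RM) R)"
    using two_pos_two_neg_tensorM_braid[OF q _ _ _ RM R] q shift by simp_all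
  show "spectrum_mat (tensorM RM R)
          = {q ^ 2, q powi (-2), -1, q powi (2 - ?N), - (q powi (- ?N))}"
       "spectrum_mat (tensorM (matrix_inv RM) R)
          = {- (q ^ 2), - (q powi (-2)), 1, - (q powi (2 - ?N)), q powi (- ?N)}"
    using spectra_tensorM_braid[OF _ RM R] q shift by (simp_all add: insert_commute)
qed

lemma tensorM_Spq_braid:
  fixes RM :: "real ^ ('m::finite \<times> 'm) ^ ('m \<times> 'm)" and R :: "real ^ ('n::finite \<times> 'n) ^ ('n \<times> 'n)"
  assumes q: "0 < q" "q \<noteq> 1" and M: "CARD('m) \<ge> 2" "SLq_braid q RM" and N: "CARD('n) \<ge> 3" "Spq_braid q R"
  shows "spectrum_mat (tensorM RM R)
           = {q ^ 2, q powi (-2), -1, - (q powi (2 - int CARD('n))), q powi (- int CARD('n))}"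
    and "spectrum_mat (tensorM (matrix_inv RM) R)
           = {- (q ^ 2), - (q powi (-2)), 1, q powi (2 - int CARD('n)), - (q powi (- int CARD('n)))}"
    and "two_pos_two_neg (tensorM RM R)" and "two_pos_two_neg (tensorM (matrix_inv RM) R)"
proof -
  let ?N = "int CARD('n)"
  note RM = SLq_braid_spectral_resolution[OF M]
  note R = Spq_braid_spectral_resolution[OF N]
  note shift = power_int_one_minus_shift[of q ?N]
  have "q powi (2 - ?N) \<noteq> 1"
    using power_int_inject[OF q, of "2 - ?N" 0] N(1) by simp
  moreover have "q powi (- ?N) \<noteq> -1"
    using zero_less_power_int[OF q(1), of "- ?N"] by linarith
  ultimately show "two_pos_two_neg (tensorM RM R)" "two_pos_two_neg (tensorM (matrix_inv RM) R)"
    using two_pos_two_neg_tensorM_braid[OF q _ _ _ RM R] q shift by simp_all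
  show "spectrum_mat (tensorM RM R)
          = {q ^ 2, q powi (-2), -1, - (q powi (2 - ?N)), q powi (- ?N)}"
       "spectrum_mat (tensorM (matrix_inv RM) R)
          = {- (q ^ 2), - (q powi (-2)), 1, q powi (2 - ?N), - (q powi (- ?N))}"
    using spectra_tensorM_braid[OF _ RM R] q shift by (simp_all add: insert_commute)
qed

theorem mainTheorem9:
  fixes q :: real
    and RM :: "real ^ ('m::finite \<times> 'm) ^ ('m \<times> 'm)"
    and R :: "real ^ ('n::finite \<times> 'n) ^ ('n \<times> 'n)"
  assumes q_pos: "0 < q" and q_ne1: "q \<noteq> 1"
    and M_ge2: "CARD('m) \<ge> 2"
    and hRM: "SLq_braid q RM"
    and hG: "(CARD('n) \<ge> 3 \<and> SOq_braid q R) \<or>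
             (even (CARD('n)) \<and> CARD('n) \<ge> 4 \<and> Spq_braid q R)"
  shows "(SOq_braid q R \<longrightarrow>
            spectrum_mat (tensorM RM R) =
              {q ^ 2, q powi (-2), -1, q powi (2 - int CARD('n)), - (q powi (- int CARD('n)))}
          \<and> spectrum_mat (tensorM (matrix_inv RM) R) =
              {- (q ^ 2), - (q powi (-2)), 1, - (q powi (2 - int CARD('n))), q powi (- int CARD('n))})
       \<and> (Spq_braid q R \<longrightarrow>
            spectrum_mat (tensorM RM R) =
              {q ^ 2, q powi (-2), -1, - (q powi (2 - int CARD('n))), q powi (- int CARD('n))}
          \<and> spectrum_mat (tensorM (matrix_inv RM) R) =
              {- (q ^ 2), - (q powi (-2)), 1, q powi (2 - int CARD('n)), - (q powi (- int CARD('n)))})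
       \<and> two_pos_two_neg (tensorM RM R)
       \<and> two_pos_two_neg (tensorM (matrix_inv RM) R)
       \<and> \<not> lemma1_weyl_ok (tensorM RM R) \<and> \<not> lemma1_clifford_ok (tensorM RM R)
       \<and> \<not> lemma1_weyl_ok (tensorM (matrix_inv RM) R)
       \<and> \<not> lemma1_clifford_ok (tensorM (matrix_inv RM) R)"
proof -
  have N3: "CARD('n) \<ge> 3"
    using hG by auto
  note SO = tensorM_SOq_braid[OF q_pos q_ne1 M_ge2 hRM N3]
  note Sp = tensorM_Spq_braid[OF q_pos q_ne1 M_ge2 hRM N3]
  have T: "two_pos_two_neg (tensorM RM R)" "two_pos_two_neg (tensorM (matrix_inv RM) R)"
    using hG SO(3,4) Sp(3,4) by blast+
  show ?thesis
    using SO(1,2) Sp(1,2) T two_pos_two_neg_imp_not_lemma1_ok[OF T(1)] two_pos_two_neg_imp_not_lemma1_ok[OF T(2)]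
    by (intro conjI impI) simp_all
qed

end
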